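(* Let $G$ be a canonically prime bichain graph, and let $\phi$ be an embedding of $G$ as an induced subgraph into a $Z$-grid $Z$ with vertex set $\{z_{i,j}:1\le i\le a,\ 1\le j\le b\}$ (for some $a,b\ge1$), where for $i<i'$, $z_{i,j}z_{i',j'}$ is an edge iff (1) $i$ odd, $i'=i+1$, $j>j'$; or (2) $i$ even, $i'=i+1$, $j\le j'$; or (3) $i$ even, $i'$ odd, $i'\ge i+3$. Then the set of columns $\{i : z_{i,j}\in\phi(V(G))\text{ for some }j\}$ is a set of consecutive integers.
   Context: A bichain graph is a bipartite graph admitting a bipartition in which each of the two parts can be divided into at most two chains, a chain being a set of vertices whose neighbourhoods are linearly ordered by inclusion. For bipartite graphs $G_1=(X_1,Y_1,E_1)$, $G_2=(X_2,Y_2,E_2)$ on disjoint vertex sets (given with bipartitions) define the disjoint union $G_1\oplus G_2=(X_1\cup X_2,Y_1\cup Y_2,E_1\cup E_2)$, the join $G_1\otimes G_2=(X_1\cup X_2,Y_1\cup Y_2,E_1\cup E_2\cup(X_1\times Y_2)\cup(X_2\times Y_1))$, and the skew join $G_1\oslash G_2=(X_1\cup X_2,Y_1\cup Y_2,E_1\cup E_2\cup(X_1\times Y_2))$. A bipartite graph is canonically prime if it cannot be written in the form $G_1\oplus G_2$, $G_1\otimes G_2$ or $G_1\oslash G_2$ with $G_1,G_2$ nonempty. In the grid, $i$ is the column index. *)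

theory Defs
  imports Main
begin

definition bipartite_graph :: "'v set \<Rightarrow> 'v set \<Rightarrow> ('v \<times> 'v) set \<Rightarrow> bool" where
  "bipartite_graph X Y E \<longleftrightarrow> finite X \<and> finite Y \<and> X \<inter> Y = {} \<and> E \<subseteq> X \<times> Y"

definition adj :: "('v \<times> 'v) set \<Rightarrow> 'v \<Rightarrow> 'v \<Rightarrow> bool" where
  "adj E u v \<longleftrightarrow> (u, v) \<in> E \<or> (v, u) \<in> E"

definition nbhd :: "('v \<times> 'v) set \<Rightarrow> 'v \<Rightarrow> 'v set" where
  "nbhd E v = {u. adj E u v}"

definition is_chain :: "('v \<times> 'v) set \<Rightarrow> 'v set \<Rightarrow> bool" where
  "is_chain E C \<longleftrightarrow> (\<forall>u\<in>C. \<forall>v\<in>C. nbhd E u \<subseteq> nbhd E v \<or> nbhd E v \<subseteq> nbhd E u)"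

definition bichain_graph :: "'v set \<Rightarrow> 'v set \<Rightarrow> ('v \<times> 'v) set \<Rightarrow> bool" where
  "bichain_graph X Y E \<longleftrightarrow> bipartite_graph X Y E \<and>
     (\<exists>P Q. P \<inter> Q = {} \<and> P \<union> Q = X \<union> Y \<and>
        (\<forall>u v. adj E u v \<longrightarrow> (u \<in> P \<and> v \<in> Q) \<or> (u \<in> Q \<and> v \<in> P)) \<and>
        (\<exists>C1 C2. P = C1 \<union> C2 \<and> is_chain E C1 \<and> is_chain E C2) \<and>
        (\<exists>C3 C4. Q = C3 \<union> C4 \<and> is_chain E C3 \<and> is_chain E C4))"

definition decomposable :: "'v set \<Rightarrow> 'v set \<Rightarrow> ('v \<times> 'v) set \<Rightarrow> bool" where
  "decomposable X Y E \<longleftrightarrow>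
     (\<exists>X1 X2 Y1 Y2. X1 \<inter> X2 = {} \<and> X1 \<union> X2 = X \<and> Y1 \<inter> Y2 = {} \<and> Y1 \<union> Y2 = Y \<and>
        X1 \<union> Y1 \<noteq> {} \<and> X2 \<union> Y2 \<noteq> {} \<and>
        (let E1 = E \<inter> (X1 \<times> Y1); E2 = E \<inter> (X2 \<times> Y2) in
          E = E1 \<union> E2 \<or>
          E = E1 \<union> E2 \<union> (X1 \<times> Y2) \<union> (X2 \<times> Y1) \<or>
          E = E1 \<union> E2 \<union> (X1 \<times> Y2)))"

definition canonically_prime :: "'v set \<Rightarrow> 'v set \<Rightarrow> ('v \<times> 'v) set \<Rightarrow> bool" where
  "canonically_prime X Y E \<longleftrightarrow> bipartite_graph X Y E \<and> \<not> decomposable X Y E"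

text \<open>Z-grid: vertex (i,j) stands for z_{i,j}, i the column index.\<close>
definition zgrid_vertices :: "nat \<Rightarrow> nat \<Rightarrow> (nat \<times> nat) set" where
  "zgrid_vertices a b = {(i, j). 1 \<le> i \<and> i \<le> a \<and> 1 \<le> j \<and> j \<le> b}"

definition zedge_lt :: "nat \<times> nat \<Rightarrow> nat \<times> nat \<Rightarrow> bool" where
  "zedge_lt p q \<longleftrightarrow> (case p of (i, j) \<Rightarrow> case q of (i', j') \<Rightarrow>
      i < i' \<and>
      ((odd i \<and> i' = i + 1 \<and> j > j') \<or>
       (even i \<and> i' = i + 1 \<and> j \<le> j') \<or>
       (even i \<and> odd i' \<and> i' \<ge> i + 3)))"

definition zadj :: "nat \<times> nat \<Rightarrow> nat \<times> nat \<Rightarrow> bool" where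
  "zadj p q \<longleftrightarrow> zedge_lt p q \<or> zedge_lt q p"

definition induced_embedding_zgrid ::
  "'v set \<Rightarrow> ('v \<times> 'v) set \<Rightarrow> nat \<Rightarrow> nat \<Rightarrow> ('v \<Rightarrow> nat \<times> nat) \<Rightarrow> bool" where
  "induced_embedding_zgrid V E a b \<phi> \<longleftrightarrow>
     inj_on \<phi> V \<and> \<phi> ` V \<subseteq> zgrid_vertices a b \<and>
     (\<forall>u\<in>V. \<forall>v\<in>V. adj E u v \<longleftrightarrow> zadj (\<phi> u) (\<phi> v))"

end

theory Submission
  imports Defs
begin

text \<open>Edges of the Z-grid join columns of opposite parity, and across an empty column \<open>m\<close>
  every even column left of \<open>m\<close> is completely joined to every odd column right of it, with no
  other edges crossing \<open>m\<close>. Since the graph is not a disjoint union, its sides therefore have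
  constant and opposite column parities, and a missing column \<open>m\<close> in the middle would exhibit
  the graph as a skew join of the parts left and right of \<open>m\<close>.\<close>

lemma decomposable_disjoint_union:
  assumes "A \<inter> (X \<union> Y) \<noteq> {}" "(X \<union> Y) - A \<noteq> {}"
    and "\<And>x y. (x, y) \<in> E \<Longrightarrow> x \<in> A \<longleftrightarrow> y \<in> A"
    and "E \<subseteq> X \<times> Y"
  shows "decomposable X Y E"
proof -
  have eq: "E = E \<inter> ((X \<inter> A) \<times> (Y \<inter> A)) \<union> E \<inter> ((X - A) \<times> (Y - A))"
    using assms(3,4) by auto
  have ne: "(X \<inter> A) \<union> (Y \<inter> A) \<noteq> {}" "(X - A) \<union> (Y - A) \<noteq> {}"
    using assms(1,2) by auto
  show ?thesis
    unfolding decomposable_def Let_def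
    by (rule exI[of _ "X \<inter> A"], rule exI[of _ "X - A"], rule exI[of _ "Y \<inter> A"],
        rule exI[of _ "Y - A"]) (use eq ne in blast)
qed

lemma decomposable_skew_join:
  assumes "A \<inter> (X \<union> Y) \<noteq> {}" "(X \<union> Y) - A \<noteq> {}"
    and "\<And>x y. x \<in> X \<Longrightarrow> y \<in> Y \<Longrightarrow> x \<in> A \<Longrightarrow> y \<notin> A \<Longrightarrow> (x, y) \<in> E"
    and "\<And>x y. (x, y) \<in> E \<Longrightarrow> y \<in> A \<Longrightarrow> x \<in> A"
    and "E \<subseteq> X \<times> Y"
  shows "decomposable X Y E"
proof -
  have eq: "E = E \<inter> ((X \<inter> A) \<times> (Y \<inter> A)) \<union> E \<inter> ((X - A) \<times> (Y - A)) \<union> ((X \<inter> A) \<times> (Y - A))"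
    using assms(3-5) by auto
  have ne: "(X \<inter> A) \<union> (Y \<inter> A) \<noteq> {}" "(X - A) \<union> (Y - A) \<noteq> {}"
    using assms(1,2) by auto
  show ?thesis
    unfolding decomposable_def Let_def
    by (rule exI[of _ "X \<inter> A"], rule exI[of _ "X - A"], rule exI[of _ "Y \<inter> A"],
        rule exI[of _ "Y - A"]) (use eq ne in blast)
qed

lemma zadj_sym: "zadj p q \<longleftrightarrow> zadj q p"
  unfolding zadj_def by auto

lemma zadj_parity: "zadj p q \<Longrightarrow> even (fst p) \<longleftrightarrow> odd (fst q)"
  unfolding zadj_def zedge_lt_def by (cases p; cases q; auto)

lemma zadj_across_column:
  assumes "fst p < m" "m < fst q"
  shows "zadj p q \<longleftrightarrow> even (fst p) \<and> odd (fst q)"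
proof -
  obtain i j i' j' where pq: "p = (i, j)" "q = (i', j')" by (cases p, cases q)
  have "i + 2 \<le> i'" using assms pq by simp
  moreover have "even i \<Longrightarrow> odd i' \<Longrightarrow> i + 2 \<le> i' \<Longrightarrow> i + 3 \<le> i'"
    by (cases "i' = i + 2") auto
  ultimately show ?thesis using pq unfolding zadj_def zedge_lt_def by auto
qed

lemma induced_embedding_edge_iff:
  assumes "bipartite_graph X Y E" "induced_embedding_zgrid (X \<union> Y) E a b \<phi>"
    and "x \<in> X" "y \<in> Y"
  shows "(x, y) \<in> E \<longleftrightarrow> zadj (\<phi> x) (\<phi> y)"
proof -
  have "(y, x) \<notin> E" using assms(1,3,4) unfolding bipartite_graph_def by auto
  then show ?thesis
    using assms(2-4) unfolding induced_embedding_zgrid_def adj_def by auto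
qed

lemma canonically_prime_column_parity:
  assumes "canonically_prime X Y E" "induced_embedding_zgrid (X \<union> Y) E a b \<phi>"
  shows "(\<forall>v\<in>X \<union> Y. even (fst (\<phi> v)) \<longleftrightarrow> v \<in> X) \<or> (\<forall>v\<in>X \<union> Y. odd (fst (\<phi> v)) \<longleftrightarrow> v \<in> X)"
proof (rule ccontr)
  define A where "A = {v. even (fst (\<phi> v)) \<longleftrightarrow> v \<in> X}"
  assume not_aligned: "\<not> ?thesis"
  have bip: "bipartite_graph X Y E"
    using assms(1) unfolding canonically_prime_def by simp
  have "decomposable X Y E"
  proof (rule decomposable_disjoint_union[where A = A])
    show "A \<inter> (X \<union> Y) \<noteq> {}" "(X \<union> Y) - A \<noteq> {}"
      using not_aligned unfolding A_def by auto
    show "E \<subseteq> X \<times> Y" using bip unfolding bipartite_graph_def by simp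
  next
    fix x y
    assume "(x, y) \<in> E"
    moreover from this have "x \<in> X" "y \<in> Y" "y \<notin> X"
      using bip unfolding bipartite_graph_def by auto
    ultimately show "x \<in> A \<longleftrightarrow> y \<in> A"
      using zadj_parity[of "\<phi> x" "\<phi> y"] induced_embedding_edge_iff[OF bip assms(2)]
      unfolding A_def by auto
  qed
  with assms(1) show False unfolding canonically_prime_def by simp
qed

lemma decomposable_at_empty_column_X_even:
  assumes "bipartite_graph X Y E" "induced_embedding_zgrid (X \<union> Y) E a b \<phi>"
    and parity: "\<forall>v\<in>X \<union> Y. even (fst (\<phi> v)) \<longleftrightarrow> v \<in> X"
    and "m \<notin> fst ` \<phi> ` (X \<union> Y)"
    and "u \<in> X \<union> Y" "w \<in> X \<union> Y" "fst (\<phi> u) < m" "m < fst (\<phi> w)"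
  shows "decomposable X Y E"
proof (rule decomposable_skew_join[where A = "{v. fst (\<phi> v) < m}"])
  have E: "E \<subseteq> X \<times> Y" "X \<inter> Y = {}" using assms(1) unfolding bipartite_graph_def by auto
  then show "E \<subseteq> X \<times> Y" by simp
  show "{v. fst (\<phi> v) < m} \<inter> (X \<union> Y) \<noteq> {}" using assms(5,7) by blast
  show "(X \<union> Y) - {v. fst (\<phi> v) < m} \<noteq> {}" using assms(6,8) by auto
  have side: "v \<in> X \<union> Y \<Longrightarrow> \<not> fst (\<phi> v) < m \<Longrightarrow> m < fst (\<phi> v)" for v
    using assms(4) by (metis image_eqI linorder_neqE_nat)
  note edge = induced_embedding_edge_iff[OF assms(1,2)]
  {
    fix x y
    assume "x \<in> X" "y \<in> Y" "x \<in> {v. fst (\<phi> v) < m}" "y \<notin> {v. fst (\<phi> v) < m}"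
    then have "fst (\<phi> x) < m" "m < fst (\<phi> y)" "even (fst (\<phi> x))" "odd (fst (\<phi> y))"
      using side[of y] parity E(2) by auto
    with \<open>x \<in> X\<close> \<open>y \<in> Y\<close> show "(x, y) \<in> E" by (simp add: edge zadj_across_column)
  next
    fix x y
    assume "(x, y) \<in> E" "y \<in> {v. fst (\<phi> v) < m}"
    then have "x \<in> X" "y \<in> Y" "fst (\<phi> y) < m" "odd (fst (\<phi> y))"
      using E parity by auto
    with \<open>(x, y) \<in> E\<close> have "\<not> m < fst (\<phi> x)"
      using edge zadj_across_column[of "\<phi> y" m "\<phi> x"] zadj_sym by auto
    with \<open>x \<in> X\<close> show "x \<in> {v. fst (\<phi> v) < m}" using side by auto
  }
qed

lemma decomposable_at_empty_column_X_odd: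
  assumes "bipartite_graph X Y E" "induced_embedding_zgrid (X \<union> Y) E a b \<phi>"
    and parity: "\<forall>v\<in>X \<union> Y. odd (fst (\<phi> v)) \<longleftrightarrow> v \<in> X"
    and "m \<notin> fst ` \<phi> ` (X \<union> Y)"
    and "u \<in> X \<union> Y" "w \<in> X \<union> Y" "fst (\<phi> u) < m" "m < fst (\<phi> w)"
  shows "decomposable X Y E"
proof (rule decomposable_skew_join[where A = "{v. m < fst (\<phi> v)}"])
  have E: "E \<subseteq> X \<times> Y" "X \<inter> Y = {}" using assms(1) unfolding bipartite_graph_def by auto
  then show "E \<subseteq> X \<times> Y" by simp
  show "{v. m < fst (\<phi> v)} \<inter> (X \<union> Y) \<noteq> {}" using assms(6,8) by blast
  show "(X \<union> Y) - {v. m < fst (\<phi> v)} \<noteq> {}" using assms(5,7) by auto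
  have side: "v \<in> X \<union> Y \<Longrightarrow> \<not> m < fst (\<phi> v) \<Longrightarrow> fst (\<phi> v) < m" for v
    using assms(4) by (metis image_eqI linorder_neqE_nat)
  note edge = induced_embedding_edge_iff[OF assms(1,2)]
  {
    fix x y
    assume "x \<in> X" "y \<in> Y" "x \<in> {v. m < fst (\<phi> v)}" "y \<notin> {v. m < fst (\<phi> v)}"
    then have "fst (\<phi> y) < m" "m < fst (\<phi> x)" "even (fst (\<phi> y))" "odd (fst (\<phi> x))"
      using side[of y] parity E(2) by auto
    then have "zadj (\<phi> y) (\<phi> x)" by (simp add: zadj_across_column)
    with \<open>x \<in> X\<close> \<open>y \<in> Y\<close> show "(x, y) \<in> E" using edge zadj_sym by blast
  next
    fix x y
    assume "(x, y) \<in> E" "y \<in> {v. m < fst (\<phi> v)}"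
    then have "x \<in> X" "y \<in> Y" "m < fst (\<phi> y)" "odd (fst (\<phi> x))"
      using E parity by auto
    with \<open>(x, y) \<in> E\<close> have "\<not> fst (\<phi> x) < m"
      using edge zadj_across_column[of "\<phi> x" m "\<phi> y"] by auto
    with \<open>x \<in> X\<close> show "x \<in> {v. m < fst (\<phi> v)}" using side by auto
  }
qed

lemma canonically_prime_no_empty_column:
  assumes "canonically_prime X Y E" "induced_embedding_zgrid (X \<union> Y) E a b \<phi>"
    and "u \<in> X \<union> Y" "w \<in> X \<union> Y" "fst (\<phi> u) < m" "m < fst (\<phi> w)"
  shows "m \<in> fst ` \<phi> ` (X \<union> Y)"
proof (rule ccontr)
  assume empty: "m \<notin> fst ` \<phi> ` (X \<union> Y)"
  have bip: "bipartite_graph X Y E"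
    using assms(1) unfolding canonically_prime_def by simp
  from canonically_prime_column_parity[OF assms(1,2)] have "decomposable X Y E"
    using decomposable_at_empty_column_X_even[OF bip assms(2) _ empty assms(3-6)]
      decomposable_at_empty_column_X_odd[OF bip assms(2) _ empty assms(3-6)]
    by blast
  with assms(1) show False unfolding canonically_prime_def by simp
qed

theorem lemma17:
  fixes X Y :: "'v set" and E :: "('v \<times> 'v) set" and a b :: nat and \<phi> :: "'v \<Rightarrow> nat \<times> nat"
  assumes "canonically_prime X Y E"
    and "bichain_graph X Y E"
    and "1 \<le> a" and "1 \<le> b"
    and "induced_embedding_zgrid (X \<union> Y) E a b \<phi>"
  shows "\<forall>i\<in>fst ` \<phi> ` (X \<union> Y). \<forall>k\<in>fst ` \<phi> ` (X \<union> Y). \<forall>m. i \<le> m \<and> m \<le> k \<longrightarrow>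
           m \<in> fst ` \<phi> ` (X \<union> Y)"
proof (intro ballI allI impI)
  fix i k m
  assume "i \<in> fst ` \<phi> ` (X \<union> Y)" "k \<in> fst ` \<phi> ` (X \<union> Y)" and ikm: "i \<le> m \<and> m \<le> k"
  then obtain u w where uw: "u \<in> X \<union> Y" "w \<in> X \<union> Y" "fst (\<phi> u) = i" "fst (\<phi> w) = k"
    by blast
  show "m \<in> fst ` \<phi> ` (X \<union> Y)"
  proof (cases "m = i \<or> m = k")
    case True
    then show ?thesis using uw by auto
  next
    case False
    with ikm uw have "fst (\<phi> u) < m" "m < fst (\<phi> w)" by auto
    with canonically_prime_no_empty_column[OF assms(1,5) uw(1,2)] show ?thesis .
  qed
qed

end
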